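(* Let $n\ge2$ and $1\le m\le n-1$ be integers and let $\alpha$ be real with $m<\alpha<m(n-m)$. Then for primes $p$ there exists a subset $G\subset G(n,n-m)$ such that $|G|\approx p^{\alpha}$ and for every $\xi\in\mathbb{F}_p^n\setminus\{0\}$, \[ |\{W\in G:\ \xi\in W\}|\lesssim |G|\,p^{-m}. \]
   Context: $\mathbb{F}_p$ is the field with $p$ elements and $G(n,k)$ is the set of all $k$-dimensional linear subspaces of $\mathbb{F}_p^n$. $|J|$ denotes cardinality. $f\lesssim g$ means $f\le Cg$ with $C$ independent of $p$ and $\xi$; $f\approx g$ means $f\lesssim g$ and $g\lesssim f$. *)

theory Defs
  imports Complex_Main "HOL-Computational_Algebra.Primes"
begin

text \<open>The field F_p is represented by the residues {0..<p} with arithmetic mod p.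
  A vector of F_p^n is a function nat => nat with entries < p at indices < n
  and value 0 at indices >= n.\<close>

definition Fpn :: "nat \<Rightarrow> nat \<Rightarrow> (nat \<Rightarrow> nat) set" where
  "Fpn p n = {x. (\<forall>i<n. x i < p) \<and> (\<forall>i\<ge>n. x i = 0)}"

definition zero_vec :: "nat \<Rightarrow> nat" where
  "zero_vec = (\<lambda>i. 0)"

definition lin_comb :: "nat \<Rightarrow> nat \<Rightarrow> nat \<Rightarrow> (nat \<Rightarrow> nat \<Rightarrow> nat) \<Rightarrow> (nat \<Rightarrow> nat) \<Rightarrow> (nat \<Rightarrow> nat)" where
  "lin_comb p n k b c = (\<lambda>i. if i < n then (\<Sum>j<k. c j * b j i) mod p else 0)"

definition lin_indep :: "nat \<Rightarrow> nat \<Rightarrow> nat \<Rightarrow> (nat \<Rightarrow> nat \<Rightarrow> nat) \<Rightarrow> bool" where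
  "lin_indep p n k b \<longleftrightarrow>
     (\<forall>c. (\<forall>j<k. c j < p) \<longrightarrow> lin_comb p n k b c = zero_vec \<longrightarrow> (\<forall>j<k. c j = 0))"

definition span_vecs :: "nat \<Rightarrow> nat \<Rightarrow> nat \<Rightarrow> (nat \<Rightarrow> nat \<Rightarrow> nat) \<Rightarrow> (nat \<Rightarrow> nat) set" where
  "span_vecs p n k b = {lin_comb p n k b c | c. \<forall>j<k. c j < p}"

definition Grassmannian :: "nat \<Rightarrow> nat \<Rightarrow> nat \<Rightarrow> (nat \<Rightarrow> nat) set set" where
  "Grassmannian p n k = {W. \<exists>b. (\<forall>j<k. b j \<in> Fpn p n) \<and> lin_indep p n k b \<and> W = span_vecs p n k b}"

end

theory Submission
  imports Defs "HOL-Computational_Algebra.Polynomial" "HOL-Library.FuncSet"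
begin

(* Let k = n - m and view a k-dimensional subspace as the graph {(A z, z)} of an m x k matrix A
   over F_p.  Take the matrices whose i-th row is the moment vector (t_i, t_i^2, ..., t_i^k) plus
   a perturbation (0, w_i), where t ranges over F_p^m and w over a set Y of about p^(alpha - m)
   <= p^(m(k-1)) perturbations.  Distinct (t, w) give distinct graphs, so |G| = p^m |Y|, which is
   about p^alpha.  A nonzero vector (x, z) lies in such a graph only if z <> 0, and then each t_i
   is a root mod p of the nonzero polynomial sum_j z_j (T^(j+1) + w_ij) - x_i of degree at most k.
   Hence for each w at most k^m parameters t remain, and the number of incidences is at most
   k^m |Y| = k^m |G| p^(-m). *)

definition vec_box :: "nat \<Rightarrow> (nat \<Rightarrow> 'a set) \<Rightarrow> (nat \<Rightarrow> 'a::zero) set" where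
  "vec_box m R = {t. (\<forall>i<m. t i \<in> R i) \<and> (\<forall>i\<ge>m. t i = 0)}"

lemma bij_betw_restrict_vec_box:
  "bij_betw (\<lambda>t. restrict t {..<m}) (vec_box m R) (\<Pi>\<^sub>E i\<in>{..<m}. R i)"
proof (rule bij_betwI')
  fix t t' assume "t \<in> vec_box m R" "t' \<in> vec_box m R"
  then show "(restrict t {..<m} = restrict t' {..<m}) = (t = t')"
    by (auto simp: vec_box_def fun_eq_iff restrict_def) (metis not_le)
next
  fix f assume f: "f \<in> (\<Pi>\<^sub>E i\<in>{..<m}. R i)"
  show "\<exists>t\<in>vec_box m R. f = restrict t {..<m}"
    using f by (intro bexI[of _ "\<lambda>i. if i < m then f i else 0"])
      (auto simp: vec_box_def restrict_def PiE_def extensional_def)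
qed (auto simp: vec_box_def)

lemma card_vec_box: "card (vec_box m R) = (\<Prod>i<m. card (R i))"
  using bij_betw_same_card[OF bij_betw_restrict_vec_box] by (simp add: card_PiE)

lemma finite_vec_box: "(\<And>i. i < m \<Longrightarrow> finite (R i)) \<Longrightarrow> finite (vec_box m R)"
  using bij_betw_finite[OF bij_betw_restrict_vec_box[of m R]] by (auto intro: finite_PiE)

lemma Fpn_eq_vec_box: "Fpn p n = vec_box n (\<lambda>_. {..<p})"
  by (auto simp: Fpn_def vec_box_def)

lemma finite_Fpn: "finite (Fpn p n)"
  by (simp add: Fpn_eq_vec_box finite_vec_box)

lemma card_Fpn: "card (Fpn p n) = p ^ n"
  by (simp add: Fpn_eq_vec_box card_vec_box)

lemma eq_if_int_dvd_diff_less: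
  fixes s a p :: nat
  assumes "int p dvd int s - int a" "s < p" "a < p"
  shows "s = a"
  using assms by (metis mod_eq_dvd_iff of_nat_less_iff of_nat_eq_iff mod_pos_pos_trivial of_nat_0_le_iff)

lemma card_roots_mod_prime_le_degree:
  fixes P :: "int poly"
  assumes "prime p" and "\<not> [:int p:] dvd P"
  shows "card {s\<in>{..<p}. int p dvd poly P (int s)} \<le> degree P"
  using assms(2)
proof (induction "degree P" arbitrary: P rule: less_induct)
  case less
  let ?roots = "\<lambda>P. {s\<in>{..<p}. int p dvd poly P (int s)}"
  show ?case
  proof (cases "?roots P = {}")
    case True
    then show ?thesis by (simp only: card.empty)
  next
    case False
    then obtain a where a: "a < p" "int p dvd poly P (int a)" by auto
    define Q where "Q = synthetic_div P (int a)"
    have PQ: "P = [:- int a, 1:] * Q + [:poly P (int a):]"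
      unfolding Q_def by (rule synthetic_div_correct'[symmetric])
    have "\<not> [:int p:] dvd Q"
    proof
      assume "[:int p:] dvd Q"
      moreover have "[:int p:] dvd [:poly P (int a):]" using a(2) by simp
      ultimately have "[:int p:] dvd P" by (subst PQ) (intro dvd_add dvd_mult)
      with less.prems show False ..
    qed
    then have "Q \<noteq> 0" by auto
    then have deg: "degree P = Suc (degree Q)"
      by (simp add: Q_def degree_synthetic_div synthetic_div_eq_0_iff)
    have root_Q: "int p dvd poly Q (int s)"
      if s: "s < p" "int p dvd poly P (int s)" and "s \<noteq> a" for s
    proof -
      have "poly P (int s) = (int s - int a) * poly Q (int s) + poly P (int a)"
        by (subst PQ) (simp add: algebra_simps)
      then have "int p dvd (int s - int a) * poly Q (int s)"
        using s(2) a(2) by (metis add_diff_cancel_right' dvd_diff)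
      moreover have "\<not> int p dvd int s - int a"
        using eq_if_int_dvd_diff_less \<open>s \<noteq> a\<close> s(1) a(1) by blast
      ultimately show ?thesis
        using assms(1) by (simp add: prime_dvd_mult_iff)
    qed
    then have "?roots P \<subseteq> insert a (?roots Q)"
      by auto
    then have "card (?roots P) \<le> card (insert a (?roots Q))"
      by (intro card_mono) auto
    also have "\<dots> \<le> Suc (card (?roots Q))"
      by (rule card_insert_le_m1) auto
    also have "\<dots> \<le> degree P"
      using less.hyps[of Q] deg \<open>\<not> [:int p:] dvd Q\<close> by simp
    finally show ?thesis .
  qed
qed

definition graph_basis :: "nat \<Rightarrow> (nat \<Rightarrow> nat \<Rightarrow> nat) \<Rightarrow> nat \<Rightarrow> nat \<Rightarrow> nat" where
  "graph_basis m A j = (\<lambda>i. if i < m then A i j else if i = m + j then 1 else 0)"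

definition graph_space :: "nat \<Rightarrow> nat \<Rightarrow> nat \<Rightarrow> (nat \<Rightarrow> nat \<Rightarrow> nat) \<Rightarrow> (nat \<Rightarrow> nat) set" where
  "graph_space p m k A = {x \<in> Fpn p (m + k). \<forall>i<m. x i = (\<Sum>j<k. A i j * x (m + j)) mod p}"

lemma lin_comb_graph_basis:
  assumes "\<forall>j<k. c j < p"
  shows "lin_comb p (m + k) k (graph_basis m A) c =
    (\<lambda>i. if i < m then (\<Sum>j<k. A i j * c j) mod p else if i < m + k then c (i - m) else 0)"
proof
  fix i
  have "(\<Sum>j<k. c j * graph_basis m A j i) = (\<Sum>j<k. if j = i - m then c j else 0)"
    if "m \<le> i" "i < m + k"
    using that by (intro sum.cong) (auto simp: graph_basis_def)
  moreover have "(\<Sum>j<k. c j * graph_basis m A j i) = (\<Sum>j<k. A i j * c j)" if "i < m"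
    using that by (intro sum.cong) (auto simp: graph_basis_def)
  ultimately show "lin_comb p (m + k) k (graph_basis m A) c i =
      (if i < m then (\<Sum>j<k. A i j * c j) mod p else if i < m + k then c (i - m) else 0)"
    using assms by (auto simp: lin_comb_def)
qed

lemma graph_basis_in_graph_space:
  assumes "1 < p" and "\<forall>i<m. \<forall>j<k. A i j < p" and "j < k"
  shows "graph_basis m A j \<in> graph_space p m k A"
proof -
  have "(\<Sum>j'<k. A i j' * graph_basis m A j (m + j')) = A i j" for i
  proof -
    have "(\<Sum>j'<k. A i j' * graph_basis m A j (m + j')) = (\<Sum>j'<k. if j' = j then A i j' else 0)"
      by (intro sum.cong) (auto simp: graph_basis_def)
    then show ?thesis using assms(3) by simp
  qed
  then show ?thesis using assms by (auto simp: graph_space_def graph_basis_def Fpn_def)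
qed

lemma graph_space_in_Grassmannian:
  assumes "1 < p" and A: "\<forall>i<m. \<forall>j<k. A i j < p"
  shows "graph_space p m k A \<in> Grassmannian p (m + k) k"
  unfolding Grassmannian_def
proof (intro CollectI exI conjI)
  show "\<forall>j<k. graph_basis m A j \<in> Fpn p (m + k)"
    using graph_basis_in_graph_space[OF assms] by (auto simp: graph_space_def)
  show "lin_indep p (m + k) k (graph_basis m A)"
    unfolding lin_indep_def
  proof (intro allI impI)
    fix c j assume c: "\<forall>j<k. c j < p" and z: "lin_comb p (m + k) k (graph_basis m A) c = zero_vec"
      and "j < k"
    have "lin_comb p (m + k) k (graph_basis m A) c (m + j) = 0"
      using z by (simp add: zero_vec_def)
    then show "c j = 0"
      using c \<open>j < k\<close> by (simp add: lin_comb_graph_basis)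
  qed
  show "graph_space p m k A = span_vecs p (m + k) k (graph_basis m A)"
  proof (rule set_eqI)
    fix x
    have "x \<in> graph_space p m k A \<longleftrightarrow>
        (\<exists>c. x = lin_comb p (m + k) k (graph_basis m A) c \<and> (\<forall>j<k. c j < p))"
    proof
      assume x: "x \<in> graph_space p m k A"
      define c where "c j = x (m + j)" for j
      have "x = lin_comb p (m + k) k (graph_basis m A) c"
        using x by (auto simp: lin_comb_graph_basis c_def graph_space_def Fpn_def fun_eq_iff)
      moreover have "\<forall>j<k. c j < p" using x by (simp add: c_def graph_space_def Fpn_def)
      ultimately show "\<exists>c. x = lin_comb p (m + k) k (graph_basis m A) c \<and> (\<forall>j<k. c j < p)"
        by blast
    next
      assume "\<exists>c. x = lin_comb p (m + k) k (graph_basis m A) c \<and> (\<forall>j<k. c j < p)"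
      then obtain c where "x = lin_comb p (m + k) k (graph_basis m A) c" "\<forall>j<k. c j < p" by blast
      then show "x \<in> graph_space p m k A"
        using assms(1) by (auto simp: lin_comb_graph_basis graph_space_def Fpn_def)
    qed
    then show "x \<in> graph_space p m k A \<longleftrightarrow> x \<in> span_vecs p (m + k) k (graph_basis m A)"
      by (simp add: span_vecs_def)
  qed
qed

lemma graph_space_eqD:
  assumes "1 < p" and "\<forall>i<m. \<forall>j<k. A i j < p" and "\<forall>i<m. \<forall>j<k. B i j < p"
    and "graph_space p m k A = graph_space p m k B" and "i < m" and "j < k"
  shows "A i j = B i j"
proof -
  have "graph_basis m A j \<in> graph_space p m k B"
    using graph_basis_in_graph_space[OF assms(1,2,6)] assms(4) by simp
  then have "A i j = (\<Sum>j'<k. B i j' * graph_basis m A j (m + j')) mod p"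
    using assms(5) by (simp add: graph_space_def graph_basis_def)
  also have "(\<Sum>j'<k. B i j' * graph_basis m A j (m + j')) = (\<Sum>j'<k. if j' = j then B i j' else 0)"
    by (intro sum.cong) (auto simp: graph_basis_def)
  finally show ?thesis using assms(3,5,6) by simp
qed

lemma graph_space_top_zero:
  assumes "x \<in> graph_space p m k A" and "\<forall>j<k. x (m + j) = 0"
  shows "x = zero_vec"
proof
  fix i
  show "x i = zero_vec i"
    using assms le_Suc_ex[of m i] by (cases "i < m"; cases "i < m + k")
      (auto simp: graph_space_def Fpn_def zero_vec_def)
qed

(* w in F_p^(m(k-1)) fills the entries j >= 1 of the m x k matrix row by row; column 0 is left
   unperturbed so that t can be read off from the matrix. *)
definition moment_perturbation :: "nat \<Rightarrow> (nat \<Rightarrow> nat) \<Rightarrow> nat \<Rightarrow> nat \<Rightarrow> nat" where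
  "moment_perturbation k w i j = (if j = 0 then 0 else w (i * (k - 1) + (j - 1)))"

definition moment_matrix :: "nat \<Rightarrow> nat \<Rightarrow> (nat \<Rightarrow> nat) \<Rightarrow> (nat \<Rightarrow> nat) \<Rightarrow> nat \<Rightarrow> nat \<Rightarrow> nat" where
  "moment_matrix p k t w i j = (t i ^ Suc j + moment_perturbation k w i j) mod p"

lemma moment_matrix_less: "0 < p \<Longrightarrow> moment_matrix p k t w i j < p"
  by (simp add: moment_matrix_def)

lemma mod_add_left_cancel_less:
  fixes a b b' p :: nat
  assumes "(a + b) mod p = (a + b') mod p" and "b < p" and "b' < p"
  shows "b = b'"
proof -
  have "int p dvd (int a + int b) - (int a + int b')"
    using assms(1) by (metis mod_eq_dvd_iff of_nat_add of_nat_mod)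
  then show ?thesis using eq_if_int_dvd_diff_less assms(2,3) by simp
qed

lemma moment_matrix_inj:
  assumes "t \<in> Fpn p m" "t' \<in> Fpn p m"
    and "w \<in> Fpn p (m * (k - 1))" "w' \<in> Fpn p (m * (k - 1))"
    and eq: "\<forall>i<m. \<forall>j<k. moment_matrix p k t w i j = moment_matrix p k t' w' i j" and "1 \<le> k"
  shows "t = t'" and "w = w'"
proof -
  have column_0: "moment_matrix p k s v i 0 = s i" if "s \<in> Fpn p m" "i < m" for s v i
    using that by (simp add: moment_matrix_def moment_perturbation_def Fpn_def)
  show t: "t = t'"
  proof
    fix i
    show "t i = t' i"
      using eq \<open>1 \<le> k\<close> assms(1,2) column_0[of t i w] column_0[of t' i w']
      by (cases "i < m") (auto simp: Fpn_def)
  qed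
  show "w = w'"
  proof
    fix l
    show "w l = w' l"
    proof (cases "l < m * (k - 1)")
      case True
      define i where "i = l div (k - 1)"
      define j where "j = Suc (l mod (k - 1))"
      have "0 < k - 1" using True by (cases "k - 1 = 0") auto
      then have "l mod (k - 1) < k - 1" by simp
      then have "i < m" "j < k" "i * (k - 1) + (j - 1) = l"
        using True by (auto simp: i_def j_def less_mult_imp_div_less div_mult_mod_eq)
      then have "moment_matrix p k t w i j = moment_matrix p k t' w' i j"
        and "moment_perturbation k v i j = v l" for v
        using eq by (auto simp: moment_perturbation_def j_def)
      then have "(t i ^ Suc j + w l) mod p = (t i ^ Suc j + w' l) mod p"
        using t by (simp add: moment_matrix_def)
      moreover have "w l < p" "w' l < p" using assms(3,4) True by (auto simp: Fpn_def)
      ultimately show ?thesis by (rule mod_add_left_cancel_less)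
    next
      case False
      then show ?thesis using assms(3,4) by (simp add: Fpn_def)
    qed
  qed
qed

definition incidence_poly :: "nat \<Rightarrow> nat \<Rightarrow> (nat \<Rightarrow> nat) \<Rightarrow> (nat \<Rightarrow> nat) \<Rightarrow> nat \<Rightarrow> int poly" where
  "incidence_poly m k w \<xi> i =
     (\<Sum>j<k. monom (int (\<xi> (m + j))) (Suc j)) +
     [:(\<Sum>j<k. int (moment_perturbation k w i j) * int (\<xi> (m + j))) - int (\<xi> i):]"

lemma degree_incidence_poly: "degree (incidence_poly m k w \<xi> i) \<le> k"
proof -
  have "degree (\<Sum>j<k. monom (int (\<xi> (m + j))) (Suc j)) \<le> k"
    by (rule degree_sum_le) (auto intro: order.trans[OF degree_monom_le])
  then show ?thesis unfolding incidence_poly_def by (intro degree_add_le) auto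
qed

lemma coeff_incidence_poly_Suc:
  assumes "j < k"
  shows "coeff (incidence_poly m k w \<xi> i) (Suc j) = int (\<xi> (m + j))"
proof -
  have "coeff (incidence_poly m k w \<xi> i) (Suc j) = (\<Sum>j'<k. if j' = j then int (\<xi> (m + j')) else 0)"
    by (simp add: incidence_poly_def coeff_sum coeff_monom)
  then show ?thesis using assms by simp
qed

lemma poly_incidence_poly:
  "poly (incidence_poly m k w \<xi> i) x =
     (\<Sum>j<k. (x ^ Suc j + int (moment_perturbation k w i j)) * int (\<xi> (m + j))) - int (\<xi> i)"
  by (simp add: incidence_poly_def poly_sum poly_monom sum_subtractf[symmetric] sum.distrib[symmetric] algebra_simps)

lemma incidence_poly_root:
  assumes "\<xi> \<in> graph_space p m k (moment_matrix p k t w)" and "i < m"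
  shows "int p dvd poly (incidence_poly m k w \<xi> i) (int (t i))"
proof -
  let ?a = "\<lambda>j. t i ^ Suc j + moment_perturbation k w i j"
  have "\<xi> i = (\<Sum>j<k. (?a j mod p) * \<xi> (m + j)) mod p"
    using assms by (simp add: graph_space_def moment_matrix_def)
  also have "\<dots> = (\<Sum>j<k. ?a j * \<xi> (m + j)) mod p"
    by (subst (1 2) mod_sum_eq[symmetric]) (simp add: mod_mult_left_eq)
  finally have "int (\<xi> i) = (\<Sum>j<k. int (?a j) * int (\<xi> (m + j))) mod int p"
    by (simp add: of_nat_mod)
  then show ?thesis by (simp add: poly_incidence_poly mod_eq_dvd_iff[symmetric])
qed

lemma card_incident_moment_parameters:
  assumes "prime p" and \<xi>: "\<xi> \<in> Fpn p (m + k) - {zero_vec}"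
  shows "card {t \<in> Fpn p m. \<xi> \<in> graph_space p m k (moment_matrix p k t w)} \<le> k ^ m"
proof (cases "\<forall>j<k. \<xi> (m + j) = 0")
  case True
  then have "{t \<in> Fpn p m. \<xi> \<in> graph_space p m k (moment_matrix p k t w)} = {}"
    using graph_space_top_zero \<xi> by blast
  then show ?thesis by (simp only: card.empty)
next
  case False
  then obtain j0 where j0: "j0 < k" "\<xi> (m + j0) \<noteq> 0" by blast
  moreover have "\<xi> (m + j0) < p" using j0(1) \<xi> by (simp add: Fpn_def)
  ultimately have "\<not> int p dvd int (\<xi> (m + j0))"
    by (auto dest: dvd_imp_le)
  then have nondegenerate: "\<not> [:int p:] dvd incidence_poly m k w \<xi> i" for i
    using coeff_incidence_poly_Suc[OF j0(1)] by (metis const_poly_dvd_iff)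
  define R where "R i = {s\<in>{..<p}. int p dvd poly (incidence_poly m k w \<xi> i) (int s)}" for i
  have card_R: "card (R i) \<le> k" for i
    using card_roots_mod_prime_le_degree[OF assms(1) nondegenerate] degree_incidence_poly
    unfolding R_def by (rule order.trans)
  have "{t \<in> Fpn p m. \<xi> \<in> graph_space p m k (moment_matrix p k t w)} \<subseteq> vec_box m R"
    using incidence_poly_root by (auto simp: vec_box_def R_def Fpn_def)
  then have "card {t \<in> Fpn p m. \<xi> \<in> graph_space p m k (moment_matrix p k t w)} \<le> card (vec_box m R)"
    by (intro card_mono finite_vec_box) (simp_all add: R_def)
  also have "\<dots> \<le> k ^ m"
    using prod_mono[of "{..<m}" "\<lambda>i. card (R i)" "\<lambda>_. k"] card_R by (simp add: card_vec_box)
  finally show ?thesis .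
qed

lemma moment_family_exists:
  assumes "prime p" and "1 \<le> k" and "N \<le> p ^ (m * (k - 1))"
  obtains G where "G \<subseteq> Grassmannian p (m + k) k" and "card G = p ^ m * N"
    and "\<And>\<xi>. \<xi> \<in> Fpn p (m + k) - {zero_vec} \<Longrightarrow> card {W \<in> G. \<xi> \<in> W} \<le> N * k ^ m"
proof -
  have "1 < p" using assms(1) prime_gt_1_nat by blast
  obtain Y where Y: "Y \<subseteq> Fpn p (m * (k - 1))" "card Y = N" "finite Y"
    using obtain_subset_with_card_n[of N "Fpn p (m * (k - 1))"] assms(3) by (auto simp: card_Fpn)
  define D where "D = Y \<times> Fpn p m"
  define F where "F = (\<lambda>(w, t). graph_space p m k (moment_matrix p k t w))"
  have "F ` D \<subseteq> Grassmannian p (m + k) k"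
    using graph_space_in_Grassmannian \<open>1 < p\<close> moment_matrix_less by (auto simp: F_def)
  moreover have "inj_on F D"
  proof (rule inj_onI, clarsimp simp: D_def F_def)
    fix w t w' t'
    assume "w \<in> Y" "t \<in> Fpn p m" "w' \<in> Y" "t' \<in> Fpn p m"
      and eq: "graph_space p m k (moment_matrix p k t w) = graph_space p m k (moment_matrix p k t' w')"
    then have "\<forall>i<m. \<forall>j<k. moment_matrix p k t w i j = moment_matrix p k t' w' i j"
      using graph_space_eqD[OF \<open>1 < p\<close> _ _ eq] moment_matrix_less \<open>1 < p\<close> by simp
    moreover have "w \<in> Fpn p (m * (k - 1))" "w' \<in> Fpn p (m * (k - 1))"
      using \<open>w \<in> Y\<close> \<open>w' \<in> Y\<close> Y(1) by auto
    ultimately show "w = w' \<and> t = t'"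
      using moment_matrix_inj[OF \<open>t \<in> Fpn p m\<close> \<open>t' \<in> Fpn p m\<close>] assms(2) by blast
  qed
  then have "card (F ` D) = p ^ m * N"
    using Y by (simp add: card_image D_def card_cartesian_product card_Fpn)
  moreover have "card {W \<in> F ` D. \<xi> \<in> W} \<le> N * k ^ m" if "\<xi> \<in> Fpn p (m + k) - {zero_vec}" for \<xi>
  proof -
    have "{W \<in> F ` D. \<xi> \<in> W} = F ` {d \<in> D. \<xi> \<in> F d}" by auto
    then have "card {W \<in> F ` D. \<xi> \<in> W} \<le> card {d \<in> D. \<xi> \<in> F d}"
      using Y(3) finite_Fpn by (simp add: card_image_le D_def)
    also have "{d \<in> D. \<xi> \<in> F d} =
        (SIGMA w:Y. {t \<in> Fpn p m. \<xi> \<in> graph_space p m k (moment_matrix p k t w)})"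
      by (auto simp: D_def F_def)
    also have "card \<dots> = (\<Sum>w\<in>Y. card {t \<in> Fpn p m. \<xi> \<in> graph_space p m k (moment_matrix p k t w)})"
      using Y(3) finite_Fpn by simp
    also have "\<dots> \<le> card Y * k ^ m"
      using sum_bounded_above[of Y _ "k ^ m"] card_incident_moment_parameters[OF assms(1) that]
      by simp
    finally show ?thesis using Y(2) by simp
  qed
  ultimately show ?thesis using that by blast
qed

lemma nat_ceiling_powr_bounds:
  fixes p d :: nat and \<beta> :: real
  assumes "2 \<le> p" and "0 \<le> \<beta>" and "\<beta> \<le> real d"
  shows "real p powr \<beta> \<le> nat \<lceil>real p powr \<beta>\<rceil>"
    and "nat \<lceil>real p powr \<beta>\<rceil> \<le> 2 * real p powr \<beta>"
    and "nat \<lceil>real p powr \<beta>\<rceil> \<le> p ^ d"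
proof -
  have "1 \<le> real p powr \<beta>" using assms by (intro ge_one_powr_ge_zero) auto
  then show "real p powr \<beta> \<le> nat \<lceil>real p powr \<beta>\<rceil>" and "nat \<lceil>real p powr \<beta>\<rceil> \<le> 2 * real p powr \<beta>"
    by linarith+
  have "real p powr \<beta> \<le> real p powr real d" using assms by (intro powr_mono) auto
  also have "\<dots> = real (p ^ d)" using assms by (simp add: powr_realpow)
  finally show "nat \<lceil>real p powr \<beta>\<rceil> \<le> p ^ d"
    by (simp add: ceiling_le_iff nat_le_iff)
qed

lemma moment_family_of_size:
  assumes "prime p" and "1 \<le> k" and "0 \<le> \<beta>" and "\<beta> \<le> real (m * (k - 1))"
  obtains G where "G \<subseteq> Grassmannian p (m + k) k"
    and "real p powr (m + \<beta>) \<le> card G" and "card G \<le> 2 * real p powr (m + \<beta>)"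
    and "\<And>\<xi>. \<xi> \<in> Fpn p (m + k) - {zero_vec} \<Longrightarrow>
           card {W \<in> G. \<xi> \<in> W} \<le> real (k ^ m) * card G * real p powr (- real m)"
proof -
  have "2 \<le> p" using assms(1) by (rule prime_ge_2_nat)
  define N where "N = nat \<lceil>real p powr \<beta>\<rceil>"
  note N = nat_ceiling_powr_bounds[OF \<open>2 \<le> p\<close> assms(3,4), folded N_def]
  obtain G where G: "G \<subseteq> Grassmannian p (m + k) k" "card G = p ^ m * N"
    and incidences: "\<And>\<xi>. \<xi> \<in> Fpn p (m + k) - {zero_vec} \<Longrightarrow> card {W \<in> G. \<xi> \<in> W} \<le> N * k ^ m"
    using moment_family_exists[OF assms(1,2) N(3)] by blast
  have p_pos: "0 < real p ^ m" using \<open>2 \<le> p\<close> by simp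
  have powr_size: "real p powr (m + \<beta>) = real p ^ m * real p powr \<beta>"
    using \<open>2 \<le> p\<close> by (simp add: powr_add powr_realpow)
  have card_G: "real (card G) = real p ^ m * N" and "real (card G) * real p powr (- real m) = N"
    using \<open>2 \<le> p\<close> by (simp_all add: G(2) powr_minus powr_realpow field_simps)
  show ?thesis
  proof (rule that[OF G(1)])
    show "real p powr (m + \<beta>) \<le> card G" and "card G \<le> 2 * real p powr (m + \<beta>)"
      using mult_left_mono[OF N(1) less_imp_le[OF p_pos]] mult_left_mono[OF N(2) less_imp_le[OF p_pos]]
      by (simp_all add: card_G powr_size)
    fix \<xi> assume "\<xi> \<in> Fpn p (m + k) - {zero_vec}"
    then have "real (card {W \<in> G. \<xi> \<in> W}) \<le> real (N * k ^ m)"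
      using incidences by (simp only: of_nat_le_iff)
    also have "\<dots> = real (k ^ m) * card G * real p powr (- real m)"
      using \<open>real (card G) * real p powr (- real m) = N\<close> by (simp add: mult.assoc mult.commute)
    finally show "card {W \<in> G. \<xi> \<in> W} \<le> real (k ^ m) * card G * real p powr (- real m)" .
  qed
qed

theorem corollary3p3:
  fixes n m :: nat and \<alpha> :: real
  assumes "n \<ge> 2" and "1 \<le> m" and "m \<le> n - 1"
    and "real m < \<alpha>" and "\<alpha> < real (m * (n - m))"
  shows "\<exists>C>0. \<forall>p::nat. prime p \<longrightarrow>
    (\<exists>G. G \<subseteq> Grassmannian p n (n - m) \<and>
         real (card G) \<le> C * real p powr \<alpha> \<and>
         real p powr \<alpha> \<le> C * real (card G) \<and>
         (\<forall>\<xi> \<in> Fpn p n - {zero_vec}.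
            real (card {W \<in> G. \<xi> \<in> W}) \<le> C * real (card G) * real p powr (- real m)))"
proof (intro exI[of _ "max 2 (real ((n - m) ^ m))"] conjI allI impI)
  define k where "k = n - m"
  have "1 \<le> k" and n: "n = m + k" using assms by (auto simp: k_def)
  have "m * (n - m) = m * (k - 1) + m" using \<open>1 \<le> k\<close> unfolding k_def[symmetric] by (cases k) auto
  then have "real (m * (n - m)) = real (m * (k - 1)) + m" by simp
  then have "0 \<le> \<alpha> - m" and "\<alpha> - m \<le> real (m * (k - 1))" and "real m + (\<alpha> - m) = \<alpha>"
    using assms(4,5) by linarith+
  fix p :: nat assume "prime p"
  obtain G where "G \<subseteq> Grassmannian p (m + k) k"
    and "real p powr \<alpha> \<le> card G" and "card G \<le> 2 * real p powr \<alpha>"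
    and incidences: "\<And>\<xi>. \<xi> \<in> Fpn p (m + k) - {zero_vec} \<Longrightarrow>
           card {W \<in> G. \<xi> \<in> W} \<le> real (k ^ m) * card G * real p powr (- real m)"
    by (erule moment_family_of_size[OF \<open>prime p\<close> \<open>1 \<le> k\<close> \<open>0 \<le> \<alpha> - m\<close> \<open>\<alpha> - m \<le> _\<close>,
          unfolded \<open>real m + (\<alpha> - m) = \<alpha>\<close>])
  define C where "C = max 2 (real (k ^ m))"
  have scale: "a * x \<le> C * x" if "a \<le> 2 \<or> a \<le> real (k ^ m)" and "0 \<le> x" for a x
    using that by (auto simp: C_def intro: mult_right_mono)
  show "\<exists>G. G \<subseteq> Grassmannian p n (n - m) \<and>
         real (card G) \<le> max 2 (real ((n - m) ^ m)) * real p powr \<alpha> \<and>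
         real p powr \<alpha> \<le> max 2 (real ((n - m) ^ m)) * real (card G) \<and>
         (\<forall>\<xi> \<in> Fpn p n - {zero_vec}.
            real (card {W \<in> G. \<xi> \<in> W}) \<le> max 2 (real ((n - m) ^ m)) * real (card G) * real p powr (- real m))"
    unfolding k_def[symmetric] C_def[symmetric] unfolding n
  proof (intro exI[of _ G] conjI ballI)
    show "real (card G) \<le> C * real p powr \<alpha>"
      using \<open>card G \<le> 2 * real p powr \<alpha>\<close> scale[of 2 "real p powr \<alpha>"] by simp
    show "real p powr \<alpha> \<le> C * real (card G)"
      using \<open>real p powr \<alpha> \<le> card G\<close> scale[of 1 "real (card G)"] by simp
    show "real (card {W \<in> G. \<xi> \<in> W}) \<le> C * real (card G) * real p powr (- real m)"
      if "\<xi> \<in> Fpn p (m + k) - {zero_vec}" for \<xi>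
      using incidences[OF that] scale[of "real (k ^ m)" "real (card G) * real p powr (- real m)"]
      by (simp add: mult.assoc)
  qed fact
qed simp

end
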